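(* Let $X$ be a path-connected topological space admitting a universal cover, $\mathbb A$ an abelian group, $\mathfrak a\in H^1(X;\mathbb A)$, $\alpha$ a singular one-cocycle representing $\mathfrak a$ and $x\in X$. Then: (1) $\mathfrak G_{x,\alpha}$ is a two-cocycle on $\mathrm{Homeo}(X,\mathfrak a)$, i.e. for all $g,h,k\in\mathrm{Homeo}(X,\mathfrak a)$, $$\mathfrak G_{x,\alpha}(h,k)-\mathfrak G_{x,\alpha}(gh,k)+\mathfrak G_{x,\alpha}(g,hk)-\mathfrak G_{x,\alpha}(g,h)=0;$$ (2) the value $\mathfrak G_{x,\alpha}(g,h)$ does not depend on the choice of the path from $x$ to $hx$; (3) the cohomology class of $\mathfrak G_{x,\alpha}$ depends neither on the reference point $x$ nor on the cocycle $\alpha$ representing $\mathfrak a$; (4) if either $g^*\alpha=\alpha$ or $hx=x$, then $\mathfrak G_{x,\alpha}(g,h)=0$.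
   Context: $\mathrm{Homeo}(X,\mathfrak a)$ is the group of homeomorphisms $g$ of $X$ with $g^*\mathfrak a=\mathfrak a$. $\mathfrak G_{x,\alpha}(g,h):=\int_\gamma g^*\alpha-\alpha$, where $\gamma$ is a path from $x$ to $hx$ and $\int_\gamma\sigma$ denotes the natural pairing of the chain $\gamma$ with the cochain $\sigma$. The cohomology class in (3) is in the group cohomology of $\mathrm{Homeo}(X,\mathfrak a)$ as a discrete group with trivial coefficients $\mathbb A$. *)

theory Defs
  imports "HOL-Analysis.Analysis" "HOL-Homology.Homology"
begin

definition covering_map_top :: "'c topology \<Rightarrow> 'a topology \<Rightarrow> ('c \<Rightarrow> 'a) \<Rightarrow> bool" where
  "covering_map_top C X p \<equiv>
     continuous_map C X p \<and> p ` topspace C = topspace X \<and>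
     (\<forall>x \<in> topspace X. \<exists>T. x \<in> T \<and> openin X T \<and>
        (\<exists>V. \<Union>V = {c \<in> topspace C. p c \<in> T} \<and>
             (\<forall>u \<in> V. openin C u) \<and>
             pairwise disjnt V \<and>
             (\<forall>u \<in> V. \<exists>q. homeomorphic_maps (subtopology C u) (subtopology X T) p q)))"

definition simply_connected_space :: "'a topology \<Rightarrow> bool" where
  "simply_connected_space X \<equiv>
     path_connected_space X \<and>
     (\<forall>p q. pathin X p \<and> p 1 = p 0 \<and> pathin X q \<and> q 1 = q 0 \<longrightarrow>
        homotopic_with (\<lambda>r. r 1 = r 0) (subtopology euclideanreal {0..1}) X p q)"

definition has_universal_cover :: "'c itself \<Rightarrow> 'a topology \<Rightarrow> bool" where
  "has_universal_cover (_ :: 'c itself) X \<equiv>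
     \<exists>(C :: 'c topology) p. covering_map_top C X p \<and> simply_connected_space C"

text \<open>A singular p-cochain is a function on singular p-simplices (only its values on
singular p-simplices of X matter).\<close>

type_synonym ('a, 'g) cochain = "((nat \<Rightarrow> real) \<Rightarrow> 'a) \<Rightarrow> 'g"

definition cobdry :: "nat \<Rightarrow> ('a, 'g::ab_group_add) cochain \<Rightarrow> ('a, 'g) cochain" where
  "cobdry p c = (\<lambda>\<sigma>. \<Sum>k\<in>{0..Suc p}.
       (if even k then c (singular_face (Suc p) k \<sigma>) else - c (singular_face (Suc p) k \<sigma>)))"

definition cocycle1 :: "'a topology \<Rightarrow> ('a, 'g::ab_group_add) cochain \<Rightarrow> bool" where
  "cocycle1 X \<alpha> \<equiv> (\<forall>\<tau>. singular_simplex 2 X \<tau> \<longrightarrow> cobdry 1 \<alpha> \<tau> = 0)"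

definition cohomologous1 :: "'a topology \<Rightarrow> ('a, 'g::ab_group_add) cochain \<Rightarrow> ('a, 'g) cochain \<Rightarrow> bool" where
  "cohomologous1 X \<alpha> \<beta> \<equiv>
     (\<exists>f. \<forall>\<sigma>. singular_simplex 1 X \<sigma> \<longrightarrow> \<alpha> \<sigma> - \<beta> \<sigma> = cobdry 0 f \<sigma>)"

definition pullback1 :: "('a \<Rightarrow> 'a) \<Rightarrow> ('a, 'g) cochain \<Rightarrow> ('a, 'g) cochain" where
  "pullback1 g \<alpha> = (\<lambda>\<sigma>. \<alpha> (simplex_map 1 g \<sigma>))"

text \<open>A path \<gamma> : [0,1] \<rightarrow> X viewed as a singular 1-simplex, from \<gamma> 0 (vertex 0) to \<gamma> 1 (vertex 1).\<close>
definition path_simplex :: "(real \<Rightarrow> 'a) \<Rightarrow> (nat \<Rightarrow> real) \<Rightarrow> 'a" where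
  "path_simplex \<gamma> = restrict (\<lambda>t. \<gamma> (t 1)) (standard_simplex 1)"

definition pair_path :: "(real \<Rightarrow> 'a) \<Rightarrow> ('a, 'g) cochain \<Rightarrow> 'g" where
  "pair_path \<gamma> \<sigma> = \<sigma> (path_simplex \<gamma>)"

text \<open>Homeomorphisms of X (normalised to be the identity outside topspace X, so that
this is literally a group under composition) preserving the class of \<alpha>.\<close>
definition Homeo_class :: "'a topology \<Rightarrow> ('a, 'g::ab_group_add) cochain \<Rightarrow> ('a \<Rightarrow> 'a) set" where
  "Homeo_class X \<alpha> = {g. homeomorphic_map X X g \<and> (\<forall>y. y \<notin> topspace X \<longrightarrow> g y = y)
                          \<and> cohomologous1 X (pullback1 g \<alpha>) \<alpha>}"

definition Gcoc :: "'a topology \<Rightarrow> 'a \<Rightarrow> ('a, 'g::ab_group_add) cochain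
                     \<Rightarrow> ('a \<Rightarrow> 'a) \<Rightarrow> ('a \<Rightarrow> 'a) \<Rightarrow> 'g" where
  "Gcoc X x \<alpha> g h =
     (let \<gamma> = (SOME \<gamma>. pathin X \<gamma> \<and> \<gamma> 0 = x \<and> \<gamma> 1 = h x)
      in pair_path \<gamma> (\<lambda>\<sigma>. pullback1 g \<alpha> \<sigma> - \<alpha> \<sigma>))"

definition group_cohomologous2 :: "('b set) \<Rightarrow> ('b \<Rightarrow> 'b \<Rightarrow> 'b) \<Rightarrow>
     ('b \<Rightarrow> 'b \<Rightarrow> 'g::ab_group_add) \<Rightarrow> ('b \<Rightarrow> 'b \<Rightarrow> 'g) \<Rightarrow> bool" where
  "group_cohomologous2 G mop c d \<equiv>
     (\<exists>f. \<forall>g\<in>G. \<forall>h\<in>G. c g h - d g h = f h - f (mop g h) + f g)"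

end

theory Submission
  imports Defs
begin

text \<open>Since \<open>g\<^sup>*\<alpha>\<close> is cohomologous to \<open>\<alpha>\<close>, the cochain \<open>g\<^sup>*\<alpha> - \<alpha>\<close> integrates along every
path \<open>\<gamma>\<close> to \<open>F\<^sub>g(\<gamma> 1) - F\<^sub>g(\<gamma> 0)\<close> for a function \<open>F\<^sub>g\<close> on points. Hence
\<open>G(g,h) = F\<^sub>g(hx) - F\<^sub>g(x)\<close>, which makes the value independent of the path and zero
when \<open>hx = x\<close>. Since \<open>(gh)\<^sup>*\<alpha> - \<alpha> = h\<^sup>*(g\<^sup>*\<alpha> - \<alpha>) + (h\<^sup>*\<alpha> - \<alpha>)\<close>, one may take
\<open>F\<^sub>g\<^sub>h = F\<^sub>g \<circ> h + F\<^sub>h\<close>, and the cocycle identity telescopes. Changing \<open>\<alpha>\<close> by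
\<open>\<delta>E\<close> and \<open>x\<close> to \<open>y\<close> changes \<open>G\<close> by the coboundary of
\<open>g \<mapsto> E(gy) - E(y) - \<integral>\<^sub>\<delta> (g\<^sup>*\<alpha> - \<alpha>)\<close>, where \<open>\<delta>\<close> is a path from \<open>y\<close> to \<open>x\<close>.\<close>

abbreviation pullback_diff :: "('a \<Rightarrow> 'a) \<Rightarrow> ('a, 'g::ab_group_add) cochain \<Rightarrow> ('a, 'g) cochain" where
  "pullback_diff g \<alpha> \<equiv> \<lambda>\<sigma>. pullback1 g \<alpha> \<sigma> - \<alpha> \<sigma>"

definition path_primitive :: "'a topology \<Rightarrow> ('a, 'g::ab_group_add) cochain \<Rightarrow> ('a \<Rightarrow> 'g) \<Rightarrow> bool" where
  "path_primitive X c F \<longleftrightarrow> (\<forall>\<gamma>. pathin X \<gamma> \<longrightarrow> pair_path \<gamma> c = F (\<gamma> 1) - F (\<gamma> 0))"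

definition point_simplex :: "'a \<Rightarrow> (nat \<Rightarrow> real) \<Rightarrow> 'a" where
  "point_simplex p = restrict (\<lambda>t. p) (standard_simplex 0)"

lemma singular_simplex_path_simplex:
  assumes "pathin X \<gamma>"
  shows "singular_simplex 1 X (path_simplex \<gamma>)"
proof -
  have "continuous_map (subtopology (powertop_real UNIV) (standard_simplex 1)) euclideanreal (\<lambda>t. t 1)"
    by (intro continuous_map_from_subtopology continuous_map_product_projection) simp
  moreover have "(\<lambda>t. t 1) ` standard_simplex 1 \<subseteq> {0..1::real}"
    by (auto simp: standard_simplex_def)
  ultimately have "continuous_map (subtopology (powertop_real UNIV) (standard_simplex 1))
      (top_of_set {0..1}) (\<lambda>t. t 1)"
    by (auto simp: continuous_map_in_subtopology)
  then have "continuous_map (subtopology (powertop_real UNIV) (standard_simplex 1)) X (\<gamma> \<circ> (\<lambda>t. t 1))"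
    using assms continuous_map_compose pathin_def by blast
  then show ?thesis
    by (auto simp: singular_simplex_def path_simplex_def o_def intro: continuous_map_eq)
qed

lemma singular_face_path_simplex:
  "singular_face 1 0 (path_simplex \<gamma>) = point_simplex (\<gamma> 1)"
  "singular_face 1 1 (path_simplex \<gamma>) = point_simplex (\<gamma> 0)"
  by (auto simp: singular_face_def path_simplex_def point_simplex_def simplical_face_def
      simplical_face_in_standard_simplex standard_simplex_def fun_eq_iff)

lemma cobdry0_path_simplex:
  "cobdry 0 f (path_simplex \<gamma>) = f (point_simplex (\<gamma> 1)) - f (point_simplex (\<gamma> 0))"
  using singular_face_path_simplex[of \<gamma>] by (simp add: cobdry_def numeral_2_eq_2)

lemma cohomologous1_imp_path_primitive:
  assumes "cohomologous1 X a b"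
  obtains F where "path_primitive X (\<lambda>\<sigma>. a \<sigma> - b \<sigma>) F"
proof -
  obtain f where f: "\<And>\<sigma>. singular_simplex 1 X \<sigma> \<Longrightarrow> a \<sigma> - b \<sigma> = cobdry 0 f \<sigma>"
    using assms unfolding cohomologous1_def by blast
  have "path_primitive X (\<lambda>\<sigma>. a \<sigma> - b \<sigma>) (f \<circ> point_simplex)"
    by (simp add: path_primitive_def pair_path_def f singular_simplex_path_simplex
        cobdry0_path_simplex del: One_nat_def)
  then show thesis ..
qed

lemma pair_path_pullback1: "pair_path \<gamma> (pullback1 g c) = pair_path (g \<circ> \<gamma>) c"
  by (auto simp: pair_path_def pullback1_def simplex_map_def path_simplex_def intro!: arg_cong[where f=c])

lemma pair_path_diff: "pair_path \<gamma> (\<lambda>\<sigma>. c \<sigma> - d \<sigma>) = pair_path \<gamma> c - pair_path \<gamma> d"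
  by (simp add: pair_path_def)

lemma path_primitive_pullback_diff_comp:
  assumes "path_primitive X (pullback_diff g \<alpha>) F" "path_primitive X (pullback_diff h \<alpha>) H"
    and "continuous_map X X h"
  shows "path_primitive X (pullback_diff (g \<circ> h) \<alpha>) (\<lambda>p. F (h p) + H p)"
  unfolding path_primitive_def
proof (intro allI impI)
  fix \<gamma> assume \<gamma>: "pathin X \<gamma>"
  have "pair_path \<gamma> (pullback_diff (g \<circ> h) \<alpha>)
      = pair_path (h \<circ> \<gamma>) (pullback_diff g \<alpha>) + pair_path \<gamma> (pullback_diff h \<alpha>)"
    by (simp add: pair_path_diff pair_path_pullback1 o_assoc)
  also have "\<dots> = F (h (\<gamma> 1)) + H (\<gamma> 1) - (F (h (\<gamma> 0)) + H (\<gamma> 0))"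
    using assms \<gamma> pathin_compose by (fastforce simp: path_primitive_def)
  finally show "pair_path \<gamma> (pullback_diff (g \<circ> h) \<alpha>)
      = F (h (\<gamma> 1)) + H (\<gamma> 1) - (F (h (\<gamma> 0)) + H (\<gamma> 0))" .
qed

lemma path_primitive_pullback_diff_cohomologous:
  assumes "path_primitive X (pullback_diff g \<alpha>) F" "path_primitive X (\<lambda>\<sigma>. \<beta> \<sigma> - \<alpha> \<sigma>) E"
    and "continuous_map X X g"
  shows "path_primitive X (pullback_diff g \<beta>) (\<lambda>p. F p + E (g p) - E p)"
  unfolding path_primitive_def
proof (intro allI impI)
  fix \<gamma> assume \<gamma>: "pathin X \<gamma>"
  have "pair_path \<gamma> (pullback_diff g \<beta>) = pair_path \<gamma> (pullback_diff g \<alpha>)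
      + pair_path (g \<circ> \<gamma>) (\<lambda>\<sigma>. \<beta> \<sigma> - \<alpha> \<sigma>) - pair_path \<gamma> (\<lambda>\<sigma>. \<beta> \<sigma> - \<alpha> \<sigma>)"
    by (simp add: pair_path_diff pair_path_pullback1)
  also have "\<dots> = F (\<gamma> 1) + E (g (\<gamma> 1)) - E (\<gamma> 1) - (F (\<gamma> 0) + E (g (\<gamma> 0)) - E (\<gamma> 0))"
    using assms \<gamma> pathin_compose by (fastforce simp: path_primitive_def)
  finally show "pair_path \<gamma> (pullback_diff g \<beta>)
      = F (\<gamma> 1) + E (g (\<gamma> 1)) - E (\<gamma> 1) - (F (\<gamma> 0) + E (g (\<gamma> 0)) - E (\<gamma> 0))" .
qed

lemma Homeo_class_continuous: "g \<in> Homeo_class X \<alpha> \<Longrightarrow> continuous_map X X g"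
  by (simp add: Homeo_class_def homeomorphic_imp_continuous_map)

lemma Homeo_class_topspace: "g \<in> Homeo_class X \<alpha> \<Longrightarrow> p \<in> topspace X \<Longrightarrow> g p \<in> topspace X"
  using Homeo_class_continuous continuous_map_image_subset_topspace by blast

lemma Homeo_class_path_primitive:
  assumes "g \<in> Homeo_class X \<alpha>"
  obtains F where "path_primitive X (pullback_diff g \<alpha>) F"
  using assms by (auto simp: Homeo_class_def elim: cohomologous1_imp_path_primitive)

lemma Gcoc_eq_path_primitive:
  assumes "path_connected_space X" "x \<in> topspace X" "h x \<in> topspace X"
    and "path_primitive X (pullback_diff g \<alpha>) F"
  shows "Gcoc X x \<alpha> g h = F (h x) - F x"
proof -
  let ?\<gamma> = "SOME \<gamma>. pathin X \<gamma> \<and> \<gamma> 0 = x \<and> \<gamma> 1 = h x"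
  have "\<exists>\<gamma>. pathin X \<gamma> \<and> \<gamma> 0 = x \<and> \<gamma> 1 = h x"
    using assms(1-3) by (auto simp: path_connected_space_def)
  then have "pathin X ?\<gamma> \<and> ?\<gamma> 0 = x \<and> ?\<gamma> 1 = h x"
    by (rule someI_ex)
  then show ?thesis
    using assms(4) by (simp add: Gcoc_def path_primitive_def)
qed

lemma Gcoc_cocycle:
  assumes "path_connected_space X" "x \<in> topspace X"
    and g: "g \<in> Homeo_class X \<alpha>" and h: "h \<in> Homeo_class X \<alpha>" and k: "k \<in> Homeo_class X \<alpha>"
  shows "Gcoc X x \<alpha> h k - Gcoc X x \<alpha> (g \<circ> h) k + Gcoc X x \<alpha> g (h \<circ> k) - Gcoc X x \<alpha> g h = 0"
proof -
  obtain F where F: "path_primitive X (pullback_diff g \<alpha>) F"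
    using g by (rule Homeo_class_path_primitive)
  obtain H where H: "path_primitive X (pullback_diff h \<alpha>) H"
    using h by (rule Homeo_class_path_primitive)
  have FH: "path_primitive X (pullback_diff (g \<circ> h) \<alpha>) (\<lambda>p. F (h p) + H p)"
    using F H Homeo_class_continuous[OF h] by (rule path_primitive_pullback_diff_comp)
  have kx: "k x \<in> topspace X" and hx: "h x \<in> topspace X" and hkx: "(h \<circ> k) x \<in> topspace X"
    using assms Homeo_class_topspace by (metis comp_apply)+
  have G: "Gcoc X x \<alpha> h k = H (k x) - H x"
    "Gcoc X x \<alpha> (g \<circ> h) k = F (h (k x)) + H (k x) - (F (h x) + H x)"
    "Gcoc X x \<alpha> g (h \<circ> k) = F (h (k x)) - F x"
    "Gcoc X x \<alpha> g h = F (h x) - F x"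
    using Gcoc_eq_path_primitive[where h=k, OF assms(1,2) kx H]
      Gcoc_eq_path_primitive[where h=k, OF assms(1,2) kx FH]
      Gcoc_eq_path_primitive[where h="h \<circ> k", OF assms(1,2) hkx F]
      Gcoc_eq_path_primitive[where h=h, OF assms(1,2) hx F]
    by simp_all
  show ?thesis
    unfolding G by (simp add: algebra_simps)
qed

lemma Gcoc_eq_pair_path:
  assumes "path_connected_space X" "g \<in> Homeo_class X \<alpha>"
    and "pathin X \<gamma>" "\<gamma> 0 = x" "\<gamma> 1 = h x"
  shows "Gcoc X x \<alpha> g h = pair_path \<gamma> (pullback_diff g \<alpha>)"
proof -
  obtain F where "path_primitive X (pullback_diff g \<alpha>) F"
    using assms(2) by (rule Homeo_class_path_primitive)
  moreover have "x \<in> topspace X" "h x \<in> topspace X"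
    using assms(3-5) path_start_in_topspace path_finish_in_topspace by metis+
  ultimately show ?thesis
    using assms by (simp add: Gcoc_eq_path_primitive path_primitive_def)
qed

lemma Gcoc_eq_0_if_invariant:
  assumes "path_connected_space X" "x \<in> topspace X" "h x \<in> topspace X"
    and "\<And>\<sigma>. singular_simplex 1 X \<sigma> \<Longrightarrow> pullback1 g \<alpha> \<sigma> = \<alpha> \<sigma>"
  shows "Gcoc X x \<alpha> g h = 0"
proof -
  have "path_primitive X (pullback_diff g \<alpha>) (\<lambda>p. 0)"
    using assms(4) by (simp add: path_primitive_def pair_path_def singular_simplex_path_simplex
        del: One_nat_def)
  then show ?thesis
    using assms(1-3) by (simp add: Gcoc_eq_path_primitive)
qed

lemma Gcoc_eq_0_if_fixed:
  assumes "path_connected_space X" "x \<in> topspace X" "g \<in> Homeo_class X \<alpha>" "h x = x"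
  shows "Gcoc X x \<alpha> g h = 0"
proof -
  obtain F where "path_primitive X (pullback_diff g \<alpha>) F"
    using assms(3) by (rule Homeo_class_path_primitive)
  then show ?thesis
    using assms by (simp add: Gcoc_eq_path_primitive)
qed

lemma Gcoc_cohomologous:
  assumes "path_connected_space X" "x \<in> topspace X" "y \<in> topspace X" "cohomologous1 X \<beta> \<alpha>"
  shows "group_cohomologous2 (Homeo_class X \<alpha>) (\<circ>) (Gcoc X x \<alpha>) (Gcoc X y \<beta>)"
proof -
  obtain E where E: "path_primitive X (\<lambda>\<sigma>. \<beta> \<sigma> - \<alpha> \<sigma>) E"
    using assms(4) by (rule cohomologous1_imp_path_primitive)
  obtain \<delta> where \<delta>: "pathin X \<delta>" "\<delta> 0 = y" "\<delta> 1 = x"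
    using assms(1-3) path_connected_space_def by metis
  define f where "f g = E (g y) - E y - pair_path \<delta> (pullback_diff g \<alpha>)" for g :: "'a \<Rightarrow> 'a"
  have "Gcoc X x \<alpha> g h - Gcoc X y \<beta> g h = f h - f (g \<circ> h) + f g"
    if g: "g \<in> Homeo_class X \<alpha>" and h: "h \<in> Homeo_class X \<alpha>" for g h
  proof -
    obtain F where F: "path_primitive X (pullback_diff g \<alpha>) F"
      using g by (rule Homeo_class_path_primitive)
    obtain H where H: "path_primitive X (pullback_diff h \<alpha>) H"
      using h by (rule Homeo_class_path_primitive)
    have FH: "path_primitive X (pullback_diff (g \<circ> h) \<alpha>) (\<lambda>p. F (h p) + H p)"
      using F H Homeo_class_continuous[OF h] by (rule path_primitive_pullback_diff_comp)
    have F\<beta>: "path_primitive X (pullback_diff g \<beta>) (\<lambda>p. F p + E (g p) - E p)"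
      by (rule path_primitive_pullback_diff_cohomologous[OF F E Homeo_class_continuous[OF g]])
    have hx: "h x \<in> topspace X" and hy: "h y \<in> topspace X"
      using Homeo_class_topspace[OF h] assms(2,3) by simp_all
    have G: "Gcoc X x \<alpha> g h = F (h x) - F x"
      "Gcoc X y \<beta> g h = F (h y) + E (g (h y)) - E (h y) - (F y + E (g y) - E y)"
      using Gcoc_eq_path_primitive[where h=h, OF assms(1,2) hx F]
        Gcoc_eq_path_primitive[where h=h, OF assms(1,3) hy F\<beta>]
      by simp_all
    have f: "f g = E (g y) - E y - (F x - F y)" "f h = E (h y) - E y - (H x - H y)"
      "f (g \<circ> h) = E (g (h y)) - E y - (F (h x) + H x - (F (h y) + H y))"
      using F H FH \<delta> by (simp_all add: f_def path_primitive_def)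
    show ?thesis
      unfolding G f by (simp add: algebra_simps)
  qed
  then show ?thesis
    unfolding group_cohomologous2_def by blast
qed

theorem lemma2p1:
  fixes X :: "'a topology" and \<alpha> :: "('a, 'g::ab_group_add) cochain" and x :: 'a
    and CT :: "'c itself"
  assumes "path_connected_space X"
    and "has_universal_cover CT X"
    and "cocycle1 X \<alpha>"
    and "x \<in> topspace X"
  shows
    "(\<forall>g\<in>Homeo_class X \<alpha>. \<forall>h\<in>Homeo_class X \<alpha>. \<forall>k\<in>Homeo_class X \<alpha>.
        Gcoc X x \<alpha> h k - Gcoc X x \<alpha> (g \<circ> h) k + Gcoc X x \<alpha> g (h \<circ> k) - Gcoc X x \<alpha> g h = 0)
   \<and> (\<forall>g\<in>Homeo_class X \<alpha>. \<forall>h\<in>Homeo_class X \<alpha>. \<forall>\<gamma>.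
        pathin X \<gamma> \<and> \<gamma> 0 = x \<and> \<gamma> 1 = h x \<longrightarrow>
        Gcoc X x \<alpha> g h = pair_path \<gamma> (\<lambda>\<sigma>. pullback1 g \<alpha> \<sigma> - \<alpha> \<sigma>))
   \<and> (\<forall>y \<beta>. y \<in> topspace X \<and> cocycle1 X \<beta> \<and> cohomologous1 X \<beta> \<alpha> \<longrightarrow>
        group_cohomologous2 (Homeo_class X \<alpha>) (\<circ>) (Gcoc X x \<alpha>) (Gcoc X y \<beta>))
   \<and> (\<forall>g\<in>Homeo_class X \<alpha>. \<forall>h\<in>Homeo_class X \<alpha>.
        ((\<forall>\<sigma>. singular_simplex 1 X \<sigma> \<longrightarrow> pullback1 g \<alpha> \<sigma> = \<alpha> \<sigma>) \<or> h x = x) \<longrightarrow>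
        Gcoc X x \<alpha> g h = 0)"
proof (intro conjI ballI allI impI)
  fix g h k assume "g \<in> Homeo_class X \<alpha>" "h \<in> Homeo_class X \<alpha>" "k \<in> Homeo_class X \<alpha>"
  then show "Gcoc X x \<alpha> h k - Gcoc X x \<alpha> (g \<circ> h) k + Gcoc X x \<alpha> g (h \<circ> k) - Gcoc X x \<alpha> g h = 0"
    using assms(1,4) by (rule Gcoc_cocycle[rotated 2])
next
  fix g h \<gamma> assume "g \<in> Homeo_class X \<alpha>" "pathin X \<gamma> \<and> \<gamma> 0 = x \<and> \<gamma> 1 = h x"
  then show "Gcoc X x \<alpha> g h = pair_path \<gamma> (pullback_diff g \<alpha>)"
    using Gcoc_eq_pair_path[OF assms(1)] by blast
next
  fix y \<beta> assume "y \<in> topspace X \<and> cocycle1 X \<beta> \<and> cohomologous1 X \<beta> \<alpha>"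
  then show "group_cohomologous2 (Homeo_class X \<alpha>) (\<circ>) (Gcoc X x \<alpha>) (Gcoc X y \<beta>)"
    using Gcoc_cohomologous[OF assms(1,4)] by blast
next
  fix g h assume g: "g \<in> Homeo_class X \<alpha>" and h: "h \<in> Homeo_class X \<alpha>"
    and "(\<forall>\<sigma>. singular_simplex 1 X \<sigma> \<longrightarrow> pullback1 g \<alpha> \<sigma> = \<alpha> \<sigma>) \<or> h x = x"
  then show "Gcoc X x \<alpha> g h = 0"
    using Gcoc_eq_0_if_invariant[where h=h, OF assms(1,4) Homeo_class_topspace[OF h assms(4)]]
      Gcoc_eq_0_if_fixed[OF assms(1,4) g] by blast
qed

end
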